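(* Let $T$ be any complete first-order theory. Then $\mathfrak C$ contains no infinite indiscernible set if and only if there are $n<\omega$ and a formula $\varphi(x_0,\dots,x_{n-1})$ such that for all pairwise distinct $a_0,\dots,a_{n-1}\in\mathfrak C$ there are permutations $\pi_1,\pi_2$ of $\{0,\dots,n-1\}$ with $\mathfrak C\models\varphi[a_{\pi_1(0)},\dots,a_{\pi_1(n-1)}]\wedge\neg\varphi[a_{\pi_2(0)},\dots,a_{\pi_2(n-1)}]$.
   Context: $\mathfrak C$ is the monster model of $T$. An indiscernible set is a set $\mathbf I$ of elements such that for each $n$, all $n$-tuples of pairwise distinct elements of $\mathbf I$ have the same type. *)

theory Defs
  imports Main "HOL-Combinatorics.Permutations"
begin

text \<open>Terms and formulas may contain
parameters (elements of the structure, constructor Par); an L-formula is one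
without parameters.\<close>

datatype ('f, 'a) trm = Var nat | Par 'a | App 'f "('f, 'a) trm list"

datatype ('f, 'r, 'a) fm =
    Eq "('f, 'a) trm" "('f, 'a) trm"
  | Rel 'r "('f, 'a) trm list"
  | Neg "('f, 'r, 'a) fm"
  | Conj "('f, 'r, 'a) fm" "('f, 'r, 'a) fm"
  | Ex nat "('f, 'r, 'a) fm"

text \<open>A structure with universe the whole type 'a.\<close>
datatype ('f, 'r, 'a) struc = Struc (funs: "'f \<Rightarrow> 'a list \<Rightarrow> 'a") (rels: "'r \<Rightarrow> 'a list \<Rightarrow> bool")

fun eval_trm :: "('f, 'r, 'a) struc \<Rightarrow> (nat \<Rightarrow> 'a) \<Rightarrow> ('f, 'a) trm \<Rightarrow> 'a" where
  "eval_trm S e (Var n) = e n"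
| "eval_trm S e (Par a) = a"
| "eval_trm S e (App f ts) = funs S f (map (eval_trm S e) ts)"

fun sat :: "('f, 'r, 'a) struc \<Rightarrow> (nat \<Rightarrow> 'a) \<Rightarrow> ('f, 'r, 'a) fm \<Rightarrow> bool" where
  "sat S e (Eq s t) = (eval_trm S e s = eval_trm S e t)"
| "sat S e (Rel r ts) = rels S r (map (eval_trm S e) ts)"
| "sat S e (Neg \<phi>) = (\<not> sat S e \<phi>)"
| "sat S e (Conj \<phi> \<psi>) = (sat S e \<phi> \<and> sat S e \<psi>)"
| "sat S e (Ex n \<phi>) = (\<exists>a. sat S (e(n := a)) \<phi>)"

fun fv_trm :: "('f, 'a) trm \<Rightarrow> nat set" where
  "fv_trm (Var n) = {n}"
| "fv_trm (Par a) = {}"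
| "fv_trm (App f ts) = (\<Union>t\<in>set ts. fv_trm t)"

fun params_trm :: "('f, 'a) trm \<Rightarrow> 'a set" where
  "params_trm (Var n) = {}"
| "params_trm (Par a) = {a}"
| "params_trm (App f ts) = (\<Union>t\<in>set ts. params_trm t)"

fun fv :: "('f, 'r, 'a) fm \<Rightarrow> nat set" where
  "fv (Eq s t) = fv_trm s \<union> fv_trm t"
| "fv (Rel r ts) = (\<Union>t\<in>set ts. fv_trm t)"
| "fv (Neg \<phi>) = fv \<phi>"
| "fv (Conj \<phi> \<psi>) = fv \<phi> \<union> fv \<psi>"
| "fv (Ex n \<phi>) = fv \<phi> - {n}"

fun params :: "('f, 'r, 'a) fm \<Rightarrow> 'a set" where
  "params (Eq s t) = params_trm s \<union> params_trm t"
| "params (Rel r ts) = (\<Union>t\<in>set ts. params_trm t)"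
| "params (Neg \<phi>) = params \<phi>"
| "params (Conj \<phi> \<psi>) = params \<phi> \<union> params \<psi>"
| "params (Ex n \<phi>) = params \<phi>"

definition L_formula :: "('f, 'r, 'a) fm \<Rightarrow> bool" where
  "L_formula \<phi> \<longleftrightarrow> params \<phi> = {}"

definition L_sentence :: "('f, 'r, 'a) fm \<Rightarrow> bool" where
  "L_sentence \<phi> \<longleftrightarrow> L_formula \<phi> \<and> fv \<phi> = {}"

definition is_model :: "('f, 'r, 'a) struc \<Rightarrow> ('f, 'r, 'a) fm set \<Rightarrow> bool" where
  "is_model M T \<longleftrightarrow> (\<forall>\<phi>\<in>T. \<forall>e. sat M e \<phi>)"

text \<open>A complete theory: a satisfiable set of L-sentences that, for every
L-sentence, contains it or its negation (theories taken deductively closed).\<close>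
definition complete_theory :: "('f, 'r, 'a) fm set \<Rightarrow> bool" where
  "complete_theory T \<longleftrightarrow>
     (\<forall>\<phi>\<in>T. L_sentence \<phi>) \<and> (\<exists>M. is_model M T) \<and>
     (\<forall>\<phi>. L_sentence \<phi> \<longrightarrow> \<phi> \<in> T \<or> Neg \<phi> \<in> T)"

text \<open>kappa-saturation (kappa = |K|): every finitely satisfiable set of formulas
in the free variable 0 with parameters from a set of size < kappa is realized.\<close>
definition saturated :: "'k set \<Rightarrow> ('f, 'r, 'a) struc \<Rightarrow> bool" where
  "saturated K M \<longleftrightarrow>
     (\<forall>A p. (card_of A, card_of K) \<in> ordLess \<longrightarrow> (\<forall>\<phi>\<in>p. params \<phi> \<subseteq> A \<and> fv \<phi> \<subseteq> {0}) \<longrightarrow>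
        (\<forall>q. finite q \<and> q \<subseteq> p \<longrightarrow> (\<exists>a. \<forall>\<phi>\<in>q. sat M (\<lambda>_. a) \<phi>)) \<longrightarrow>
        (\<exists>a. \<forall>\<phi>\<in>p. sat M (\<lambda>_. a) \<phi>))"

definition automorphism :: "('f, 'r, 'a) struc \<Rightarrow> ('a \<Rightarrow> 'a) \<Rightarrow> bool" where
  "automorphism M \<sigma> \<longleftrightarrow> bij \<sigma> \<and>
     (\<forall>f xs. \<sigma> (funs M f xs) = funs M f (map \<sigma> xs)) \<and>
     (\<forall>r xs. rels M r xs \<longleftrightarrow> rels M r (map \<sigma> xs))"

definition strongly_homogeneous :: "'k set \<Rightarrow> ('f, 'r, 'a) struc \<Rightarrow> bool" where
  "strongly_homogeneous K M \<longleftrightarrow>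
     (\<forall>A h. (card_of A, card_of K) \<in> ordLess \<longrightarrow>
        (\<forall>\<phi> e. L_formula \<phi> \<longrightarrow> range e \<subseteq> A \<longrightarrow> (sat M e \<phi> \<longleftrightarrow> sat M (h \<circ> e) \<phi>)) \<longrightarrow>
        (\<exists>\<sigma>. automorphism M \<sigma> \<and> (\<forall>a\<in>A. \<sigma> a = h a)))"

text \<open>Monster model of T: a kappa-saturated, strongly kappa-homogeneous model of T,
where kappa = |K| is uncountable and bigger than the size |L| of the language.\<close>
definition monster_model :: "('f, 'r, 'a) fm set \<Rightarrow> 'k set \<Rightarrow> ('f, 'r, 'a) struc \<Rightarrow> bool" where
  "monster_model T K M \<longleftrightarrow> is_model M T \<and>
     (natLeq, card_of K) \<in> ordLess \<and> (card_of (UNIV :: ('f + 'r) set), card_of K) \<in> ordLess \<and>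
     saturated K M \<and> strongly_homogeneous K M"

definition indiscernible_set :: "('f, 'r, 'a) struc \<Rightarrow> 'a set \<Rightarrow> bool" where
  "indiscernible_set M I \<longleftrightarrow>
     (\<forall>n xs ys. length xs = n \<and> length ys = n \<and> distinct xs \<and> distinct ys \<and>
        set xs \<subseteq> I \<and> set ys \<subseteq> I \<longrightarrow>
        (\<forall>\<phi>. L_formula \<phi> \<and> fv \<phi> \<subseteq> {..<n} \<longrightarrow>
           (sat M (\<lambda>i. xs ! i) \<phi> \<longleftrightarrow> sat M (\<lambda>i. ys ! i) \<phi>)))"

end

theory Submission
  imports Defs
begin

(* If some formula changes its truth value under permutations of every tuple of distinct
   elements, it cannot do so on a tuple taken from an indiscernible set.

   Conversely, suppose every formula is symmetric on some tuple of distinct elements.  Apply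
   this to the formula saying that two consecutive N-blocks satisfy the same members of a finite
   set Psi, on a tuple made of 2^|Psi| + 1 blocks: if the formula holds there, it holds for every
   pair of disjoint blocks, so the first block is symmetric for all of Psi at once; if it fails,
   it fails for every pair, which contradicts the pigeonhole principle.  This replaces Ramsey's
   theorem: every finite set of formulas has arbitrarily long finite indiscernible sequences.
   That a prefix of length m extends to such sequences is a type over m parameters, so
   aleph_1-saturation of the monster model adds one element at a time, and the limit sequence
   is an infinite indiscernible set. *)

lemma eval_trm_cong: "(\<And>v. v \<in> fv_trm t \<Longrightarrow> g v = h v) \<Longrightarrow> eval_trm S g t = eval_trm S h t"
proof (induction t)
  case (App f ts)
  have "eval_trm S g t = eval_trm S h t" if "t \<in> set ts" for t
    using that App.prems by (intro App.IH) auto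
  then show ?case by (simp cong: map_cong)
qed simp_all

lemma sat_cong: "(\<And>v. v \<in> fv \<phi> \<Longrightarrow> g v = h v) \<Longrightarrow> sat S g \<phi> \<longleftrightarrow> sat S h \<phi>"
proof (induction \<phi> arbitrary: g h)
  case (Eq s t)
  have "eval_trm S g s = eval_trm S h s" "eval_trm S g t = eval_trm S h t"
    using Eq.prems by (auto intro: eval_trm_cong)
  then show ?case by simp
next
  case (Rel r ts)
  have "eval_trm S g t = eval_trm S h t" if "t \<in> set ts" for t
    using that Rel by (intro eval_trm_cong) auto
  then show ?case by (simp cong: map_cong)
next
  case (Neg \<phi>)
  have "sat S g \<phi> = sat S h \<phi>"
    using Neg.prems by (intro Neg.IH) simp
  then show ?case by simp
next
  case (Conj \<phi> \<psi>)
  have "sat S g \<phi> = sat S h \<phi>"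
    using Conj.prems by (intro Conj.IH(1)) simp
  moreover have "sat S g \<psi> = sat S h \<psi>"
    using Conj.prems by (intro Conj.IH(2)) simp
  ultimately show ?case by simp
next
  case (Ex n \<phi>)
  have "sat S (g(n := a)) \<phi> = sat S (h(n := a)) \<phi>" for a
    using Ex.prems by (intro Ex.IH) auto
  then show ?case by simp
qed

(* The formulas needed below are never written down: they are obtained from the closure
   properties of definable predicates that follow. *)
definition definable :: "('f, 'r, 'a) struc \<Rightarrow> 'a set \<Rightarrow> nat set \<Rightarrow> ((nat \<Rightarrow> 'a) \<Rightarrow> bool) \<Rightarrow> bool" where
  "definable M A V P \<longleftrightarrow> (\<exists>\<psi>. params \<psi> \<subseteq> A \<and> fv \<psi> \<subseteq> V \<and> (\<forall>g. sat M g \<psi> \<longleftrightarrow> P g))"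

lemma definable_local:
  assumes "definable M A V P" and "\<And>v. v \<in> V \<Longrightarrow> g v = h v"
  shows "P g \<longleftrightarrow> P h"
proof -
  obtain \<psi> where "fv \<psi> \<subseteq> V" "\<forall>g. sat M g \<psi> \<longleftrightarrow> P g"
    using assms(1) unfolding definable_def by blast
  with assms(2) sat_cong[of \<psi> g h M] show ?thesis by blast
qed

lemma definable_cong: "definable M A V P \<Longrightarrow> (\<And>g. P g \<longleftrightarrow> Q g) \<Longrightarrow> definable M A V Q"
  unfolding definable_def by simp

lemma definable_mono: "definable M A V P \<Longrightarrow> A \<subseteq> A' \<Longrightarrow> V \<subseteq> V' \<Longrightarrow> definable M A' V' P"
  unfolding definable_def by blast

lemma definable_sat: "params \<phi> \<subseteq> A \<Longrightarrow> fv \<phi> \<subseteq> V \<Longrightarrow> definable M A V (\<lambda>g. sat M g \<phi>)"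
  unfolding definable_def by blast

lemma definable_True: "definable M A V (\<lambda>_. True)"
  unfolding definable_def by (rule exI[of _ "Ex 0 (Eq (Var 0) (Var 0))"]) simp

lemma definable_eq: "v \<in> V \<Longrightarrow> w \<in> V \<Longrightarrow> definable M A V (\<lambda>g. g v = g w)"
  unfolding definable_def by (rule exI[of _ "Eq (Var v) (Var w)"]) simp

lemma definable_eq_param: "v \<in> V \<Longrightarrow> a \<in> A \<Longrightarrow> definable M A V (\<lambda>g. g v = a)"
  unfolding definable_def by (rule exI[of _ "Eq (Var v) (Par a)"]) simp

lemma definable_not: "definable M A V P \<Longrightarrow> definable M A V (\<lambda>g. \<not> P g)"
  unfolding definable_def by (metis fv.simps(3) params.simps(3) sat.simps(3))

lemma definable_conj:
  "definable M A V P \<Longrightarrow> definable M A V Q \<Longrightarrow> definable M A V (\<lambda>g. P g \<and> Q g)"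
  unfolding definable_def by (metis Un_least fv.simps(4) params.simps(4) sat.simps(4))

lemma definable_iff:
  assumes "definable M A V P" and "definable M A V Q"
  shows "definable M A V (\<lambda>g. P g \<longleftrightarrow> Q g)"
proof -
  have "definable M A V (\<lambda>g. \<not> (P g \<and> \<not> Q g) \<and> \<not> (Q g \<and> \<not> P g))"
    using assms by (intro definable_conj definable_not)
  then show ?thesis by (rule definable_cong) blast
qed

lemma definable_All_finite:
  assumes "finite I" and "\<And>x. x \<in> I \<Longrightarrow> definable M A V (P x)"
  shows "definable M A V (\<lambda>g. \<forall>x\<in>I. P x g)"
  using assms
proof (induction I rule: finite_induct)
  case empty
  show ?case by (simp add: definable_True)
next
  case (insert x I)
  then have "definable M A V (\<lambda>g. P x g \<and> (\<forall>y\<in>I. P y g))"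
    by (intro definable_conj) auto
  then show ?case by simp
qed

lemma definable_Ex:
  assumes "definable M A V P"
  shows "definable M A (V - {v}) (\<lambda>g. \<exists>a. P (g(v := a)))"
proof -
  obtain \<psi> where \<psi>: "params \<psi> \<subseteq> A" "fv \<psi> \<subseteq> V" "\<forall>g. sat M g \<psi> \<longleftrightarrow> P g"
    using assms unfolding definable_def by blast
  show ?thesis
    unfolding definable_def
  proof (intro exI conjI)
    show "params (Ex v \<psi>) \<subseteq> A" "fv (Ex v \<psi>) \<subseteq> V - {v}"
      using \<psi> by auto
    show "\<forall>g. sat M g (Ex v \<psi>) \<longleftrightarrow> (\<exists>a. P (g(v := a)))"
      using \<psi>(3) by simp
  qed
qed

lemma definable_Ex_finite:
  assumes "finite W" and "definable M A V P"
  shows "definable M A (V - W) (\<lambda>g. \<exists>h. (\<forall>v. v \<notin> W \<longrightarrow> h v = g v) \<and> P h)"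
  using assms(1)
proof (induction W rule: finite_induct)
  case empty
  have "(\<lambda>g. \<exists>h. (\<forall>v. v \<notin> {} \<longrightarrow> h v = g v) \<and> P h) = P"
    by (simp flip: fun_eq_iff)
  with assms(2) show ?case by simp
next
  case (insert w W)
  have "definable M A (V - W - {w})
      (\<lambda>g. \<exists>a. \<exists>h. (\<forall>v. v \<notin> W \<longrightarrow> h v = (g(w := a)) v) \<and> P h)"
    using insert.IH by (rule definable_Ex)
  moreover have "(\<exists>a. \<exists>h. (\<forall>v. v \<notin> W \<longrightarrow> h v = (g(w := a)) v) \<and> P h) \<longleftrightarrow>
      (\<exists>h. (\<forall>v. v \<notin> insert w W \<longrightarrow> h v = g v) \<and> P h)" for g
  proof
    assume "\<exists>a h. (\<forall>v. v \<notin> W \<longrightarrow> h v = (g(w := a)) v) \<and> P h"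
    then obtain a h where "\<forall>v. v \<notin> W \<longrightarrow> h v = (g(w := a)) v" "P h" by blast
    then show "\<exists>h. (\<forall>v. v \<notin> insert w W \<longrightarrow> h v = g v) \<and> P h"
      by (intro exI[of _ h]) auto
  next
    assume "\<exists>h. (\<forall>v. v \<notin> insert w W \<longrightarrow> h v = g v) \<and> P h"
    then obtain h where "\<forall>v. v \<notin> insert w W \<longrightarrow> h v = g v" "P h" by blast
    then show "\<exists>a h. (\<forall>v. v \<notin> W \<longrightarrow> h v = (g(w := a)) v) \<and> P h"
      by (intro exI[of _ "h w"] exI[of _ h]) auto
  qed
  ultimately have "definable M A (V - W - {w}) (\<lambda>g. \<exists>h. (\<forall>v. v \<notin> insert w W \<longrightarrow> h v = g v) \<and> P h)"
    by (rule definable_cong)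
  moreover have "V - W - {w} = V - insert w W" by blast
  ultimately show ?case by simp
qed

lemma definable_instantiate:
  assumes "definable M A V P" and "finite W"
  shows "definable M (A \<union> e ` W) (V - W) (\<lambda>g. P (\<lambda>v. if v \<in> W then e v else g v))"
proof -
  have "definable M (A \<union> e ` W) (V \<union> W) (\<lambda>g. (\<forall>v\<in>W. g v = e v) \<and> P g)"
  proof (rule definable_conj)
    show "definable M (A \<union> e ` W) (V \<union> W) (\<lambda>g. \<forall>v\<in>W. g v = e v)"
      using assms(2) by (rule definable_All_finite) (rule definable_eq_param; simp)
    show "definable M (A \<union> e ` W) (V \<union> W) P"
      using assms(1) by (rule definable_mono) auto
  qed
  with assms(2) have "definable M (A \<union> e ` W) (V \<union> W - W)
      (\<lambda>g. \<exists>h. (\<forall>v. v \<notin> W \<longrightarrow> h v = g v) \<and> (\<forall>v\<in>W. h v = e v) \<and> P h)"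
    by (rule definable_Ex_finite)
  moreover have "(\<exists>h. (\<forall>v. v \<notin> W \<longrightarrow> h v = g v) \<and> (\<forall>v\<in>W. h v = e v) \<and> P h) \<longleftrightarrow>
      P (\<lambda>v. if v \<in> W then e v else g v)" for g
  proof
    assume "\<exists>h. (\<forall>v. v \<notin> W \<longrightarrow> h v = g v) \<and> (\<forall>v\<in>W. h v = e v) \<and> P h"
    then obtain h where "\<forall>v. v \<notin> W \<longrightarrow> h v = g v" "\<forall>v\<in>W. h v = e v" "P h" by blast
    moreover from this(1,2) have "h = (\<lambda>v. if v \<in> W then e v else g v)" by auto
    ultimately show "P (\<lambda>v. if v \<in> W then e v else g v)" by simp
  qed (intro exI[of _ "\<lambda>v. if v \<in> W then e v else g v"], auto)
  ultimately have "definable M (A \<union> e ` W) (V \<union> W - W) (\<lambda>g. P (\<lambda>v. if v \<in> W then e v else g v))"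
    by (rule definable_cong)
  moreover have "V \<union> W - W = V - W" by blast
  ultimately show ?thesis by simp
qed

(* Renaming is expressed as an existential quantification over V, hence f must move V off itself. *)
lemma definable_rename:
  assumes "definable M A V P" and "finite V" and "f ` V \<inter> V = {}"
  shows "definable M A (f ` V) (\<lambda>g. P (g \<circ> f))"
proof -
  have "definable M A (V \<union> f ` V) (\<lambda>g. (\<forall>v\<in>V. g v = g (f v)) \<and> P g)"
  proof (rule definable_conj)
    show "definable M A (V \<union> f ` V) (\<lambda>g. \<forall>v\<in>V. g v = g (f v))"
      using assms(2) by (rule definable_All_finite) (rule definable_eq; simp)
    show "definable M A (V \<union> f ` V) P"
      using assms(1) by (rule definable_mono) auto
  qed
  with assms(2) have "definable M A (V \<union> f ` V - V)
      (\<lambda>g. \<exists>h. (\<forall>v. v \<notin> V \<longrightarrow> h v = g v) \<and> (\<forall>v\<in>V. h v = h (f v)) \<and> P h)"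
    by (rule definable_Ex_finite)
  moreover have "(\<exists>h. (\<forall>v. v \<notin> V \<longrightarrow> h v = g v) \<and> (\<forall>v\<in>V. h v = h (f v)) \<and> P h) \<longleftrightarrow>
      P (g \<circ> f)" for g
  proof
    assume "\<exists>h. (\<forall>v. v \<notin> V \<longrightarrow> h v = g v) \<and> (\<forall>v\<in>V. h v = h (f v)) \<and> P h"
    then obtain h where h: "\<forall>v. v \<notin> V \<longrightarrow> h v = g v" "\<forall>v\<in>V. h v = h (f v)" "P h" by blast
    have "h v = (g \<circ> f) v" if "v \<in> V" for v
      using h(1,2) assms(3) that by auto
    with h(3) show "P (g \<circ> f)" using definable_local[OF assms(1)] by blast
  next
    assume "P (g \<circ> f)"
    moreover have "P (g \<circ> f) \<longleftrightarrow> P (\<lambda>v. if v \<in> V then g (f v) else g v)"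
      by (rule definable_local[OF assms(1)]) simp
    ultimately show "\<exists>h. (\<forall>v. v \<notin> V \<longrightarrow> h v = g v) \<and> (\<forall>v\<in>V. h v = h (f v)) \<and> P h"
      using assms(3) by (intro exI[of _ "\<lambda>v. if v \<in> V then g (f v) else g v"]) auto
  qed
  ultimately have "definable M A (V \<union> f ` V - V) (\<lambda>g. P (g \<circ> f))"
    by (rule definable_cong)
  moreover have "V \<union> f ` V - V = f ` V" using assms(3) by blast
  ultimately show ?thesis by simp
qed

definition symmetric_on :: "('f, 'r, 'a) struc \<Rightarrow> ('f, 'r, 'a) fm \<Rightarrow> 'a list \<Rightarrow> bool" where
  "symmetric_on M \<phi> as \<longleftrightarrow>
     (\<forall>\<pi>. \<pi> permutes {..<length as} \<longrightarrow> (sat M (\<lambda>i. as ! \<pi> i) \<phi> \<longleftrightarrow> sat M (\<lambda>i. as ! i) \<phi>))"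

lemma not_symmetric_on_iff:
  "\<not> symmetric_on M \<phi> as \<longleftrightarrow> (\<exists>\<pi>1 \<pi>2. \<pi>1 permutes {..<length as} \<and> \<pi>2 permutes {..<length as} \<and>
     sat M (\<lambda>i. as ! \<pi>1 i) \<phi> \<and> \<not> sat M (\<lambda>i. as ! \<pi>2 i) \<phi>)"
proof
  assume "\<not> symmetric_on M \<phi> as"
  then obtain \<pi> where "\<pi> permutes {..<length as}"
    "\<not> (sat M (\<lambda>i. as ! \<pi> i) \<phi> \<longleftrightarrow> sat M (\<lambda>i. as ! id i) \<phi>)"
    unfolding symmetric_on_def by auto
  with permutes_id show "\<exists>\<pi>1 \<pi>2. \<pi>1 permutes {..<length as} \<and> \<pi>2 permutes {..<length as} \<and>
     sat M (\<lambda>i. as ! \<pi>1 i) \<phi> \<and> \<not> sat M (\<lambda>i. as ! \<pi>2 i) \<phi>"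
    by blast
qed (auto simp: symmetric_on_def)

lemma ex_permutation_extending:
  assumes "distinct is" and "set is \<subseteq> {..<N}"
  obtains \<pi> where "\<pi> permutes {..<N}" and "\<And>i. i < length is \<Longrightarrow> \<pi> i = is ! i"
proof -
  obtain rest where rest: "distinct rest" "set rest = {..<N} - set is"
    using finite_distinct_list[of "{..<N} - set is"] by auto
  have "mset (is @ rest) = mset [0..<N]"
    using assms rest by (subst set_eq_iff_mset_eq_distinct[symmetric]) auto
  then obtain \<pi> where "\<pi> permutes {..<length [0..<N]}" "permute_list \<pi> [0..<N] = is @ rest"
    by (rule mset_eq_permutation)
  then have \<pi>: "\<pi> permutes {..<N}" "permute_list \<pi> [0..<N] = is @ rest"
    by simp_all
  moreover have "\<pi> i = is ! i" if "i < length is" for i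
  proof -
    have "length (is @ rest) = N"
      using \<pi>(2) length_permute_list[of \<pi> "[0..<N]"] by simp
    then have "i < N" using that by simp
    then have "permute_list \<pi> [0..<N] ! i = \<pi> i"
      using \<pi>(1) permutes_in_image[OF \<pi>(1), of i] by (simp add: permute_list_nth)
    with \<pi>(2) that show ?thesis by (simp add: nth_append)
  qed
  ultimately show thesis using that by blast
qed

lemma symmetric_on_reindex:
  assumes "symmetric_on M \<phi> as" and "distinct is" and "set is \<subseteq> {..<length as}"
    and "fv \<phi> \<subseteq> {..<length is}"
  shows "sat M (\<lambda>i. as ! (is ! i)) \<phi> \<longleftrightarrow> sat M (\<lambda>i. as ! i) \<phi>"
proof -
  obtain \<pi> where \<pi>: "\<pi> permutes {..<length as}" "\<And>i. i < length is \<Longrightarrow> \<pi> i = is ! i"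
    using ex_permutation_extending[OF assms(2,3)] by blast
  have "sat M (\<lambda>i. as ! (is ! i)) \<phi> \<longleftrightarrow> sat M (\<lambda>i. as ! \<pi> i) \<phi>"
    using assms(4) \<pi>(2) by (intro sat_cong) auto
  also have "\<dots> \<longleftrightarrow> sat M (\<lambda>i. as ! i) \<phi>"
    using assms(1) \<pi>(1) unfolding symmetric_on_def by blast
  finally show ?thesis .
qed

lemma indiscernible_set_symmetric_on:
  assumes "indiscernible_set M I" and "distinct as" and "set as \<subseteq> I"
    and "L_formula \<phi>" and "fv \<phi> \<subseteq> {..<length as}"
  shows "symmetric_on M \<phi> as"
  unfolding symmetric_on_def
proof (intro allI impI)
  fix \<pi> assume \<pi>: "\<pi> permutes {..<length as}"
  have "sat M (\<lambda>i. permute_list \<pi> as ! i) \<phi> \<longleftrightarrow> sat M (\<lambda>i. as ! i) \<phi>"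
    using assms(1)[unfolded indiscernible_set_def, rule_format, of "permute_list \<pi> as" "length as" as \<phi>]
      assms(2-5) \<pi> by simp
  moreover have "sat M (\<lambda>i. permute_list \<pi> as ! i) \<phi> \<longleftrightarrow> sat M (\<lambda>i. as ! \<pi> i) \<phi>"
    using assms(5) \<pi> by (intro sat_cong) (auto simp: permute_list_nth)
  ultimately show "sat M (\<lambda>i. as ! \<pi> i) \<phi> \<longleftrightarrow> sat M (\<lambda>i. as ! i) \<phi>" by simp
qed

definition has_symmetric_tuples :: "('f, 'r, 'a) struc \<Rightarrow> bool" where
  "has_symmetric_tuples M \<longleftrightarrow> (\<forall>n \<phi>. L_formula \<phi> \<and> fv \<phi> \<subseteq> {..<n} \<longrightarrow>
     (\<exists>as. length as = n \<and> distinct as \<and> symmetric_on M \<phi> as))"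

lemma indiscernible_set_imp_has_symmetric_tuples:
  fixes M :: "('f, 'r, 'a) struc"
  assumes "infinite I" and "indiscernible_set M I"
  shows "has_symmetric_tuples M"
  unfolding has_symmetric_tuples_def
proof (intro allI impI)
  fix n and \<phi> :: "('f, 'r, 'a) fm" assume \<phi>: "L_formula \<phi> \<and> fv \<phi> \<subseteq> {..<n}"
  obtain F where "finite F" "card F = n" "F \<subseteq> I"
    using infinite_arbitrarily_large[OF assms(1)] by blast
  moreover obtain as where "set as = F" "distinct as"
    using finite_distinct_list[OF \<open>finite F\<close>] by blast
  ultimately have "length as = n" "set as \<subseteq> I"
    by (auto simp flip: distinct_card)
  with assms(2) \<phi> \<open>distinct as\<close> show "\<exists>as. length as = n \<and> distinct as \<and> symmetric_on M \<phi> as"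
    using indiscernible_set_symmetric_on by blast
qed

lemma has_symmetric_tuples_iff:
  "has_symmetric_tuples M \<longleftrightarrow> \<not> (\<exists>n \<phi>. L_formula \<phi> \<and> fv \<phi> \<subseteq> {..<n} \<and>
     (\<forall>as. length as = n \<and> distinct as \<longrightarrow>
        (\<exists>\<pi>1 \<pi>2. \<pi>1 permutes {..<n} \<and> \<pi>2 permutes {..<n} \<and>
           sat M (\<lambda>i. as ! (\<pi>1 i)) \<phi> \<and> \<not> sat M (\<lambda>i. as ! (\<pi>2 i)) \<phi>)))"
proof -
  have "(\<exists>\<pi>1 \<pi>2. \<pi>1 permutes {..<n} \<and> \<pi>2 permutes {..<n} \<and>
      sat M (\<lambda>i. as ! (\<pi>1 i)) \<phi> \<and> \<not> sat M (\<lambda>i. as ! (\<pi>2 i)) \<phi>) \<longleftrightarrow> \<not> symmetric_on M \<phi> as"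
    if "length as = n" for n \<phi> as
    using that by (simp add: not_symmetric_on_iff)
  then have "(\<forall>as. length as = n \<and> distinct as \<longrightarrow>
        (\<exists>\<pi>1 \<pi>2. \<pi>1 permutes {..<n} \<and> \<pi>2 permutes {..<n} \<and>
           sat M (\<lambda>i. as ! (\<pi>1 i)) \<phi> \<and> \<not> sat M (\<lambda>i. as ! (\<pi>2 i)) \<phi>)) \<longleftrightarrow>
      \<not> (\<exists>as. length as = n \<and> distinct as \<and> symmetric_on M \<phi> as)" for n \<phi>
    by blast
  then show ?thesis
    unfolding has_symmetric_tuples_def by (simp only:) blast
qed

lemma ex_equal_traces:
  fixes P :: "nat \<Rightarrow> 'a \<Rightarrow> bool"
  assumes "finite \<Psi>"
  shows "\<exists>t t'. t < t' \<and> t' \<le> 2 ^ card \<Psi> \<and> (\<forall>\<phi>\<in>\<Psi>. P t \<phi> \<longleftrightarrow> P t' \<phi>)"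
proof -
  define trace where "trace t = {\<phi>\<in>\<Psi>. P t \<phi>}" for t
  have "card (trace ` {..2 ^ card \<Psi>}) \<le> card (Pow \<Psi>)"
    by (rule card_mono) (auto simp: assms trace_def)
  also have "\<dots> < card {..(2::nat) ^ card \<Psi>}"
    using assms by (simp add: card_Pow)
  finally have "\<not> inj_on trace {..2 ^ card \<Psi>}"
    by (rule pigeonhole)
  then obtain t t' where "t \<le> 2 ^ card \<Psi>" "t' \<le> 2 ^ card \<Psi>" "t \<noteq> t'" "trace t = trace t'"
    unfolding inj_on_def by auto
  then have "min t t' < max t t'" "max t t' \<le> 2 ^ card \<Psi>" "trace (min t t') = trace (max t t')"
    by (auto simp: min_def max_def)
  moreover from this(3) have "\<forall>\<phi>\<in>\<Psi>. P (min t t') \<phi> \<longleftrightarrow> P (max t t') \<phi>"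
    unfolding trace_def set_eq_iff by blast
  ultimately show ?thesis by blast
qed

lemma definable_blocks_agree:
  assumes "finite \<Psi>" and "\<forall>\<phi>\<in>\<Psi>. L_formula \<phi> \<and> fv \<phi> \<subseteq> {..<N}"
  shows "definable M {} {..<2 * N} (\<lambda>g. \<forall>\<phi>\<in>\<Psi>. sat M g \<phi> \<longleftrightarrow> sat M (\<lambda>i. g (N + i)) \<phi>)"
  using assms(1)
proof (rule definable_All_finite)
  fix \<phi> assume "\<phi> \<in> \<Psi>"
  then have \<phi>: "definable M {} {..<N} (\<lambda>g. sat M g \<phi>)"
    using assms(2) by (intro definable_sat) (auto simp: L_formula_def)
  show "definable M {} {..<2 * N} (\<lambda>g. sat M g \<phi> \<longleftrightarrow> sat M (\<lambda>i. g (N + i)) \<phi>)"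
  proof (rule definable_iff)
    show "definable M {} {..<2 * N} (\<lambda>g. sat M g \<phi>)"
      using \<phi> by (rule definable_mono) auto
    have "definable M {} ((\<lambda>i. N + i) ` {..<N}) (\<lambda>g. sat M (g \<circ> (\<lambda>i. N + i)) \<phi>)"
      using \<phi> by (rule definable_rename) auto
    then show "definable M {} {..<2 * N} (\<lambda>g. sat M (\<lambda>i. g (N + i)) \<phi>)"
      unfolding comp_def by (rule definable_mono) auto
  qed
qed

lemma sat_append_blocks:
  assumes "\<And>g. sat M g \<psi> \<longleftrightarrow> (\<forall>\<phi>\<in>\<Psi>. sat M g \<phi> \<longleftrightarrow> sat M (\<lambda>i. g (N + i)) \<phi>)"
    and "\<forall>\<phi>\<in>\<Psi>. fv \<phi> \<subseteq> {..<N}" and "length xs = N"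
  shows "sat M (\<lambda>i. as ! ((xs @ ys) ! i)) \<psi> \<longleftrightarrow>
    (\<forall>\<phi>\<in>\<Psi>. sat M (\<lambda>i. as ! (xs ! i)) \<phi> \<longleftrightarrow> sat M (\<lambda>i. as ! (ys ! i)) \<phi>)"
  unfolding assms(1)
proof (rule ball_cong[OF refl])
  fix \<phi> assume "\<phi> \<in> \<Psi>"
  then have "fv \<phi> \<subseteq> {..<N}" using assms(2) by blast
  then have "sat M (\<lambda>i. as ! ((xs @ ys) ! i)) \<phi> \<longleftrightarrow> sat M (\<lambda>i. as ! (xs ! i)) \<phi>"
    and "sat M (\<lambda>i. as ! ((xs @ ys) ! (N + i))) \<phi> \<longleftrightarrow> sat M (\<lambda>i. as ! (ys ! i)) \<phi>"
    using assms(3) by (auto intro!: sat_cong simp: nth_append)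
  then show "(sat M (\<lambda>i. as ! ((xs @ ys) ! i)) \<phi> \<longleftrightarrow> sat M (\<lambda>i. as ! ((xs @ ys) ! (N + i))) \<phi>) \<longleftrightarrow>
    (sat M (\<lambda>i. as ! (xs ! i)) \<phi> \<longleftrightarrow> sat M (\<lambda>i. as ! (ys ! i)) \<phi>)"
    by simp
qed

lemma symmetric_on_take:
  assumes "N \<le> length as" and "fv \<phi> \<subseteq> {..<N}"
    and "\<And>\<pi>. \<pi> permutes {..<N} \<Longrightarrow> sat M (\<lambda>i. as ! \<pi> i) \<phi> \<longleftrightarrow> sat M (\<lambda>i. as ! (N + i)) \<phi>"
  shows "symmetric_on M \<phi> (take N as)"
  unfolding symmetric_on_def
proof (intro allI impI)
  fix \<pi> assume "\<pi> permutes {..<length (take N as)}"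
  then have \<pi>: "\<pi> permutes {..<N}" using assms(1) by (simp add: min_absorb2)
  have "sat M (\<lambda>i. take N as ! \<pi> i) \<phi> \<longleftrightarrow> sat M (\<lambda>i. as ! \<pi> i) \<phi>"
    using assms(2) permutes_in_image[OF \<pi>] by (intro sat_cong) auto
  also have "\<dots> \<longleftrightarrow> sat M (\<lambda>i. as ! id i) \<phi>"
    using assms(3)[OF \<pi>] assms(3)[OF permutes_id] by simp
  also have "\<dots> \<longleftrightarrow> sat M (\<lambda>i. take N as ! i) \<phi>"
    using assms(2) by (intro sat_cong) auto
  finally show "sat M (\<lambda>i. take N as ! \<pi> i) \<phi> \<longleftrightarrow> sat M (\<lambda>i. take N as ! i) \<phi>" .
qed

lemma symmetric_on_take_if_blocks_agree:
  assumes "2 * N \<le> length as" and "fv \<phi> \<subseteq> {..<N}"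
    and agree: "\<And>xs ys. length xs = N \<Longrightarrow> length ys = N \<Longrightarrow> distinct (xs @ ys) \<Longrightarrow>
      set (xs @ ys) \<subseteq> {..<length as} \<Longrightarrow>
      sat M (\<lambda>i. as ! (xs ! i)) \<phi> \<longleftrightarrow> sat M (\<lambda>i. as ! (ys ! i)) \<phi>"
  shows "symmetric_on M \<phi> (take N as)"
proof -
  have "sat M (\<lambda>i. as ! \<pi> i) \<phi> \<longleftrightarrow> sat M (\<lambda>i. as ! (N + i)) \<phi>" if "\<pi> permutes {..<N}" for \<pi>
  proof -
    have "\<pi> i < N" if "i < N" for i
      using permutes_in_image[OF \<open>\<pi> permutes {..<N}\<close>, of i] that by simp
    then have "set (map \<pi> [0..<N]) \<subseteq> {..<N}"
      by auto
    moreover have "distinct (map \<pi> [0..<N])"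
      using permutes_inj_on[OF that] by (simp add: distinct_map)
    ultimately have "distinct (map \<pi> [0..<N] @ [N..<N + N])"
      and "set (map \<pi> [0..<N] @ [N..<N + N]) \<subseteq> {..<length as}"
      using assms(1) by auto
    then have "sat M (\<lambda>i. as ! (map \<pi> [0..<N] ! i)) \<phi> \<longleftrightarrow> sat M (\<lambda>i. as ! ([N..<N + N] ! i)) \<phi>"
      by (intro agree) simp_all
    moreover have "sat M (\<lambda>i. as ! (map \<pi> [0..<N] ! i)) \<phi> \<longleftrightarrow> sat M (\<lambda>i. as ! \<pi> i) \<phi>"
      using assms(2) by (intro sat_cong) auto
    moreover have "sat M (\<lambda>i. as ! ([N..<N + N] ! i)) \<phi> \<longleftrightarrow> sat M (\<lambda>i. as ! (N + i)) \<phi>"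
      using assms(2) by (intro sat_cong) auto
    ultimately show ?thesis by simp
  qed
  moreover have "N \<le> length as"
    using assms(1) by simp
  ultimately show ?thesis
    using assms(2) by (intro symmetric_on_take)
qed

lemma ex_agreeing_blocks:
  assumes "finite \<Psi>" and "(2 ^ card \<Psi> + 1) * N \<le> length as" and "\<forall>\<phi>\<in>\<Psi>. fv \<phi> \<subseteq> {..<N}"
  obtains xs ys where "length xs = N" and "length ys = N" and "distinct (xs @ ys)"
    and "set (xs @ ys) \<subseteq> {..<length as}"
    and "\<forall>\<phi>\<in>\<Psi>. sat M (\<lambda>i. as ! (xs ! i)) \<phi> \<longleftrightarrow> sat M (\<lambda>i. as ! (ys ! i)) \<phi>"
proof -
  obtain t t' where tt: "t < t'" "t' \<le> 2 ^ card \<Psi>"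
    "\<forall>\<phi>\<in>\<Psi>. sat M (\<lambda>i. as ! (t * N + i)) \<phi> \<longleftrightarrow> sat M (\<lambda>i. as ! (t' * N + i)) \<phi>"
    using ex_equal_traces[OF assms(1), of "\<lambda>t \<phi>. sat M (\<lambda>i. as ! (t * N + i)) \<phi>"] by blast
  have "t * N + N \<le> t' * N"
    using tt(1) mult_le_mono1[of "Suc t" t' N] by simp
  moreover have "Suc t' * N \<le> (2 ^ card \<Psi> + 1) * N"
    using tt(2) by (intro mult_le_mono1) simp
  then have "t' * N + N \<le> length as"
    using assms(2) by (simp only: mult_Suc)
  ultimately have "distinct ([t * N..<t * N + N] @ [t' * N..<t' * N + N])"
    and "set ([t * N..<t * N + N] @ [t' * N..<t' * N + N]) \<subseteq> {..<length as}"
    by auto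
  moreover have "sat M (\<lambda>i. as ! ([t * N..<t * N + N] ! i)) \<phi> \<longleftrightarrow> sat M (\<lambda>i. as ! (t * N + i)) \<phi>"
    if "\<phi> \<in> \<Psi>" for \<phi>
    using assms(3)[rule_format, OF that] by (intro sat_cong) auto
  moreover have "sat M (\<lambda>i. as ! ([t' * N..<t' * N + N] ! i)) \<phi> \<longleftrightarrow> sat M (\<lambda>i. as ! (t' * N + i)) \<phi>"
    if "\<phi> \<in> \<Psi>" for \<phi>
    using assms(3)[rule_format, OF that] by (intro sat_cong) auto
  ultimately show thesis
    using that[of "[t * N..<t * N + N]" "[t' * N..<t' * N + N]"] tt(3) by simp
qed

lemma ex_common_symmetric_tuple:
  fixes M :: "('f, 'r, 'a) struc"
  assumes "has_symmetric_tuples M" and "finite \<Psi>" and "\<forall>\<phi>\<in>\<Psi>. L_formula \<phi> \<and> fv \<phi> \<subseteq> {..<N}"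
  shows "\<exists>bs. length bs = N \<and> distinct bs \<and> (\<forall>\<phi>\<in>\<Psi>. symmetric_on M \<phi> bs)"
proof -
  have fv\<Psi>: "\<forall>\<phi>\<in>\<Psi>. fv \<phi> \<subseteq> {..<N}" using assms(3) by blast
  obtain \<psi> where "params \<psi> \<subseteq> {}" "fv \<psi> \<subseteq> {..<2 * N}"
    and \<psi>: "\<And>g. sat M g \<psi> \<longleftrightarrow> (\<forall>\<phi>\<in>\<Psi>. sat M g \<phi> \<longleftrightarrow> sat M (\<lambda>i. g (N + i)) \<phi>)"
    using definable_blocks_agree[OF assms(2,3)] unfolding definable_def by blast
  define n where "n = (2 ^ card \<Psi> + 1) * N"
  have "2 * N \<le> n"
    unfolding n_def by (intro mult_le_mono1) simp
  with \<open>params \<psi> \<subseteq> {}\<close> \<open>fv \<psi> \<subseteq> {..<2 * N}\<close> have "L_formula \<psi>" "fv \<psi> \<subseteq> {..<n}"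
    by (auto simp: L_formula_def)
  then obtain as where as: "length as = n" "distinct as" "symmetric_on M \<psi> as"
    using assms(1)[unfolded has_symmetric_tuples_def, rule_format, where n = n and \<phi> = \<psi>] by blast
  have compare: "sat M (\<lambda>i. as ! i) \<psi> \<longleftrightarrow>
      (\<forall>\<phi>\<in>\<Psi>. sat M (\<lambda>i. as ! (xs ! i)) \<phi> \<longleftrightarrow> sat M (\<lambda>i. as ! (ys ! i)) \<phi>)"
    if "length xs = N" "length ys = N" "distinct (xs @ ys)" "set (xs @ ys) \<subseteq> {..<length as}"
    for xs ys
  proof -
    have "sat M (\<lambda>i. as ! i) \<psi> \<longleftrightarrow> sat M (\<lambda>i. as ! ((xs @ ys) ! i)) \<psi>"
      using symmetric_on_reindex[OF as(3) that(3,4)] that(1,2) \<open>fv \<psi> \<subseteq> {..<2 * N}\<close>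
      by (simp add: mult_2)
    also have "\<dots> \<longleftrightarrow> (\<forall>\<phi>\<in>\<Psi>. sat M (\<lambda>i. as ! (xs ! i)) \<phi> \<longleftrightarrow> sat M (\<lambda>i. as ! (ys ! i)) \<phi>)"
      using \<psi> fv\<Psi> that(1) by (rule sat_append_blocks)
    finally show ?thesis .
  qed
  show ?thesis
  proof (cases "sat M (\<lambda>i. as ! i) \<psi>")
    case True
    have "symmetric_on M \<phi> (take N as)" if "\<phi> \<in> \<Psi>" for \<phi>
    proof (rule symmetric_on_take_if_blocks_agree)
      show "2 * N \<le> length as" "fv \<phi> \<subseteq> {..<N}"
        using \<open>2 * N \<le> n\<close> as(1) fv\<Psi> that by auto
      show "sat M (\<lambda>i. as ! (xs ! i)) \<phi> \<longleftrightarrow> sat M (\<lambda>i. as ! (ys ! i)) \<phi>"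
        if "length xs = N" "length ys = N" "distinct (xs @ ys)" "set (xs @ ys) \<subseteq> {..<length as}"
        for xs ys
        using compare[OF that] True \<open>\<phi> \<in> \<Psi>\<close> by blast
    qed
    moreover have "N \<le> length as"
      using \<open>2 * N \<le> n\<close> as(1) by simp
    ultimately show ?thesis
      using as(2) by (intro exI[of _ "take N as"]) simp
  next
    case False
    have "(2 ^ card \<Psi> + 1) * N \<le> length as"
      using as(1) by (simp add: n_def)
    then obtain xs ys where "length xs = N" "length ys = N" "distinct (xs @ ys)"
      "set (xs @ ys) \<subseteq> {..<length as}"
      "\<forall>\<phi>\<in>\<Psi>. sat M (\<lambda>i. as ! (xs ! i)) \<phi> \<longleftrightarrow> sat M (\<lambda>i. as ! (ys ! i)) \<phi>"
      by (rule ex_agreeing_blocks[OF assms(2) _ fv\<Psi>])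
    with compare False show ?thesis by blast
  qed
qed

lemma distinct_length_le_card: "distinct xs \<Longrightarrow> set xs \<subseteq> A \<Longrightarrow> finite A \<Longrightarrow> length xs \<le> card A"
  by (metis card_mono distinct_card)

(* Comparing every injective re-indexing with the identity is the same as comparing any two. *)
definition indiscernible_prefix :: "('f, 'r, 'a) struc \<Rightarrow> ('f, 'r, 'a) fm set \<Rightarrow> nat \<Rightarrow> (nat \<Rightarrow> 'a) \<Rightarrow> bool" where
  "indiscernible_prefix M \<Phi> N s \<longleftrightarrow> inj_on s {..<N} \<and>
     (\<forall>\<phi>\<in>\<Phi>. \<forall>is. distinct is \<and> set is \<subseteq> {..<N} \<and> fv \<phi> \<subseteq> {..<length is} \<longrightarrow>
        (sat M (\<lambda>i. s (is ! i)) \<phi> \<longleftrightarrow> sat M s \<phi>))"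

lemma indiscernible_prefix_cong:
  assumes "\<And>k. k < N \<Longrightarrow> s k = s' k"
  shows "indiscernible_prefix M \<Phi> N s \<longleftrightarrow> indiscernible_prefix M \<Phi> N s'"
proof -
  have "sat M (\<lambda>i. s (is ! i)) \<phi> = sat M (\<lambda>i. s' (is ! i)) \<phi> \<and> sat M s \<phi> = sat M s' \<phi>"
    if "distinct is" "set is \<subseteq> {..<N}" "fv \<phi> \<subseteq> {..<length is}" for \<phi> "is"
  proof
    show "sat M (\<lambda>i. s (is ! i)) \<phi> = sat M (\<lambda>i. s' (is ! i)) \<phi>"
      using that assms by (intro sat_cong) (auto simp: subset_iff)
    have "length is \<le> N"
      using distinct_length_le_card[OF that(1,2)] by simp
    then show "sat M s \<phi> = sat M s' \<phi>"
      using that(3) assms by (intro sat_cong) auto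
  qed
  moreover have "inj_on s {..<N} \<longleftrightarrow> inj_on s' {..<N}"
    using assms by (intro inj_on_cong) simp
  ultimately show ?thesis
    unfolding indiscernible_prefix_def by blast
qed

lemma indiscernible_prefix_mono:
  "indiscernible_prefix M \<Phi>' N' s \<Longrightarrow> \<Phi> \<subseteq> \<Phi>' \<Longrightarrow> N \<le> N' \<Longrightarrow> indiscernible_prefix M \<Phi> N s"
  unfolding indiscernible_prefix_def
  by (meson inj_on_subset lessThan_subset_iff order_trans subsetD)

lemma indiscernible_prefixD:
  assumes "indiscernible_prefix M \<Phi> N s" and "\<phi> \<in> \<Phi>"
    and "distinct is" and "set is \<subseteq> {..<N}" and "fv \<phi> \<subseteq> {..<length is}"
  shows "sat M (\<lambda>i. s (is ! i)) \<phi> \<longleftrightarrow> sat M s \<phi>"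
  using assms unfolding indiscernible_prefix_def by blast

lemma definable_indiscernible_prefix:
  assumes "finite \<Phi>" and "\<forall>\<phi>\<in>\<Phi>. L_formula \<phi>" and "N \<le> B"
  shows "definable M {} {B..<B + N} (\<lambda>g. indiscernible_prefix M \<Phi> N (\<lambda>k. g (B + k)))"
proof -
  define Offdiag where "Offdiag = {(i, j). i < N \<and> j < N \<and> i \<noteq> j}"
  define C where "C = {(\<phi>, is). \<phi> \<in> \<Phi> \<and> distinct is \<and> set is \<subseteq> {..<N} \<and> fv \<phi> \<subseteq> {..<length is}}"
  have "finite Offdiag"
    by (rule finite_subset[of _ "{..<N} \<times> {..<N}"]) (auto simp: Offdiag_def)
  have "finite C"
    by (rule finite_subset[of _ "\<Phi> \<times> {is. set is \<subseteq> {..<N} \<and> distinct is}"])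
      (auto simp: C_def assms(1) finite_subset_distinct)
  have reindexed: "definable M {} {B..<B + N} (\<lambda>g. sat M (\<lambda>i. g (B + f i)) \<phi>)"
    if "\<phi> \<in> \<Phi>" "fv \<phi> \<subseteq> {..<n}" "n \<le> N" "f ` {..<n} \<subseteq> {..<N}" for \<phi> n f
  proof -
    have "definable M {} {..<n} (\<lambda>g. sat M g \<phi>)"
      using that(1,2) assms(2) by (intro definable_sat) (auto simp: L_formula_def)
    then have "definable M {} ((\<lambda>i. B + f i) ` {..<n}) (\<lambda>g. sat M (g \<circ> (\<lambda>i. B + f i)) \<phi>)"
      by (rule definable_rename) (use assms(3) that(3) in auto)
    then show ?thesis
      unfolding comp_def by (rule definable_mono) (use that(4) in auto)
  qed
  have "definable M {} {B..<B + N} (\<lambda>g. (\<forall>(i, j)\<in>Offdiag. g (B + i) \<noteq> g (B + j)) \<and>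
      (\<forall>(\<phi>, is)\<in>C. sat M (\<lambda>i. g (B + is ! i)) \<phi> \<longleftrightarrow> sat M (\<lambda>i. g (B + i)) \<phi>))"
  proof (intro definable_conj)
    show "definable M {} {B..<B + N} (\<lambda>g. \<forall>(i, j)\<in>Offdiag. g (B + i) \<noteq> g (B + j))"
      using \<open>finite Offdiag\<close> by (rule definable_All_finite)
        (auto simp: Offdiag_def intro!: definable_not definable_eq)
    show "definable M {} {B..<B + N}
        (\<lambda>g. \<forall>(\<phi>, is)\<in>C. sat M (\<lambda>i. g (B + is ! i)) \<phi> \<longleftrightarrow> sat M (\<lambda>i. g (B + i)) \<phi>)"
    proof (rule definable_All_finite[OF \<open>finite C\<close>])
      fix c assume "c \<in> C"
      then obtain \<phi> "is" where c: "c = (\<phi>, is)" "\<phi> \<in> \<Phi>" "distinct is" "set is \<subseteq> {..<N}"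
        "fv \<phi> \<subseteq> {..<length is}"
        unfolding C_def by blast
      have "length is \<le> N"
        using distinct_length_le_card[OF c(3,4)] by simp
      moreover have "is ! i < N" if "i < length is" for i
        using c(4) nth_mem[OF that] by blast
      ultimately show "definable M {} {B..<B + N}
          (\<lambda>g. case c of (\<phi>, is) \<Rightarrow> sat M (\<lambda>i. g (B + is ! i)) \<phi> \<longleftrightarrow> sat M (\<lambda>i. g (B + i)) \<phi>)"
        using c by (auto intro!: definable_iff reindexed)
    qed
  qed
  then show ?thesis
    by (rule definable_cong) (auto simp: indiscernible_prefix_def inj_on_def Offdiag_def C_def)
qed

lemma ex_indiscernible_prefix:
  fixes M :: "('f, 'r, 'a) struc"
  assumes "has_symmetric_tuples M" and "finite \<Phi>" and "\<forall>\<phi>\<in>\<Phi>. L_formula \<phi>"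
  shows "\<exists>s. indiscernible_prefix M \<Phi> N s"
proof -
  have "finite {\<phi>\<in>\<Phi>. fv \<phi> \<subseteq> {..<N}}" "\<forall>\<phi>\<in>{\<phi>\<in>\<Phi>. fv \<phi> \<subseteq> {..<N}}. L_formula \<phi> \<and> fv \<phi> \<subseteq> {..<N}"
    using assms(2,3) by auto
  then obtain bs where bs: "length bs = N" "distinct bs"
    "\<forall>\<phi>\<in>{\<phi>\<in>\<Phi>. fv \<phi> \<subseteq> {..<N}}. symmetric_on M \<phi> bs"
    using ex_common_symmetric_tuple[OF assms(1)] by blast
  have "indiscernible_prefix M \<Phi> N (\<lambda>i. bs ! i)"
    unfolding indiscernible_prefix_def
  proof (intro conjI ballI allI impI)
    show "inj_on (\<lambda>i. bs ! i) {..<N}"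
      using bs(1,2) by (simp add: inj_on_nth)
  next
    fix \<phi> "is" assume \<phi>: "\<phi> \<in> \<Phi>" and "is": "distinct is \<and> set is \<subseteq> {..<N} \<and> fv \<phi> \<subseteq> {..<length is}"
    then have "length is \<le> N"
      using distinct_length_le_card[of "is" "{..<N}"] by simp
    with "is" have "fv \<phi> \<subseteq> {..<N}" by auto
    with \<phi> bs(3) have "symmetric_on M \<phi> bs" by blast
    with "is" bs(1) show "sat M (\<lambda>i. bs ! (is ! i)) \<phi> \<longleftrightarrow> sat M (\<lambda>i. bs ! i) \<phi>"
      using symmetric_on_reindex by blast
  qed
  then show ?thesis by blast
qed

definition extends_to_indiscernible ::
  "('f, 'r, 'a) struc \<Rightarrow> ('f, 'r, 'a) fm set \<Rightarrow> nat \<Rightarrow> nat \<Rightarrow> (nat \<Rightarrow> 'a) \<Rightarrow> bool" where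
  "extends_to_indiscernible M \<Phi> N m s \<longleftrightarrow> (\<exists>s'. (\<forall>i<m. s' i = s i) \<and> indiscernible_prefix M \<Phi> N s')"

lemma extends_to_indiscernible_mono:
  "extends_to_indiscernible M \<Phi>' N' m s \<Longrightarrow> \<Phi> \<subseteq> \<Phi>' \<Longrightarrow> N \<le> N' \<Longrightarrow>
    extends_to_indiscernible M \<Phi> N m s"
  unfolding extends_to_indiscernible_def by (meson indiscernible_prefix_mono)

lemma extends_to_indiscernible_Suc_iff:
  "extends_to_indiscernible M \<Phi> N (Suc m) (s(m := a)) \<longleftrightarrow>
    (\<exists>t. indiscernible_prefix M \<Phi> N (\<lambda>k. if k < m then s k else if k = m then a else t k))"
proof
  assume "extends_to_indiscernible M \<Phi> N (Suc m) (s(m := a))"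
  then obtain s' where s': "\<forall>i<Suc m. s' i = (s(m := a)) i" "indiscernible_prefix M \<Phi> N s'"
    unfolding extends_to_indiscernible_def by blast
  moreover have "(\<lambda>k. if k < m then s k else if k = m then a else s' k) = s'"
    using s'(1) by (auto simp: less_Suc_eq)
  ultimately show "\<exists>t. indiscernible_prefix M \<Phi> N (\<lambda>k. if k < m then s k else if k = m then a else t k)"
    by (intro exI[of _ s']) simp
next
  assume "\<exists>t. indiscernible_prefix M \<Phi> N (\<lambda>k. if k < m then s k else if k = m then a else t k)"
  then obtain t where "indiscernible_prefix M \<Phi> N (\<lambda>k. if k < m then s k else if k = m then a else t k)" ..
  then show "extends_to_indiscernible M \<Phi> N (Suc m) (s(m := a))"
    unfolding extends_to_indiscernible_def
    by (intro exI[of _ "\<lambda>k. if k < m then s k else if k = m then a else t k"]) (simp add: less_Suc_eq)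
qed

lemma definable_shift_local:
  assumes "definable M A {B..<B + N} (\<lambda>g. P (\<lambda>k. g (B + k)))" and "\<And>k. k < N \<Longrightarrow> f k = f' k"
  shows "P f \<longleftrightarrow> P f'"
proof -
  have "P (\<lambda>k. f (B + k - B)) \<longleftrightarrow> P (\<lambda>k. f' (B + k - B))"
    using assms(2) by (rule definable_local[OF assms(1)]) auto
  then show ?thesis by simp
qed

(* Term k of the sequence is variable B + k; the terms before m become parameters, those after m
   are quantified, and term m is moved to variable 0, which B > 0 keeps out of the way. *)
lemma definable_next_term:
  assumes "definable M A {B..<B + N} (\<lambda>g. P (\<lambda>k. g (B + k)))" and "m < N" and "0 < B"
  shows "definable M (A \<union> s ` {..<m}) {0}
    (\<lambda>g. \<exists>t. P (\<lambda>k. if k < m then s k else if k = m then g 0 else t k))"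
proof -
  define W where "W = {B + Suc m..<B + N}"
  define Q where "Q g \<longleftrightarrow> (\<exists>h. (\<forall>v. v \<notin> W \<longrightarrow> h v = g v) \<and> P (\<lambda>k. if k < m then s k else h (B + k)))"
    for g
  have "definable M (A \<union> (\<lambda>v. s (v - B)) ` {B..<B + m}) ({B..<B + N} - {B..<B + m})
      (\<lambda>g. P (\<lambda>k. (\<lambda>v. if v \<in> {B..<B + m} then s (v - B) else g v) (B + k)))"
    using assms(1) by (rule definable_instantiate) simp
  moreover have "(\<lambda>v. s (v - B)) ` {B..<B + m} = s ` {..<m}"
  proof (intro equalityI subsetI)
    fix y assume "y \<in> s ` {..<m}"
    then obtain k where "k < m" "y = s k" by blast
    then show "y \<in> (\<lambda>v. s (v - B)) ` {B..<B + m}"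
      by (intro image_eqI[of _ _ "B + k"]) auto
  qed auto
  moreover have "(\<lambda>k. (\<lambda>v. if v \<in> {B..<B + m} then s (v - B) else g v) (B + k)) =
      (\<lambda>k. if k < m then s k else g (B + k))" for g
    by (rule ext) auto
  ultimately have "definable M (A \<union> s ` {..<m}) ({B..<B + N} - {B..<B + m})
      (\<lambda>g. P (\<lambda>k. if k < m then s k else g (B + k)))"
    by simp
  then have "definable M (A \<union> s ` {..<m}) ({B..<B + N} - {B..<B + m} - W) Q"
    unfolding Q_def by (intro definable_Ex_finite) (simp_all add: W_def)
  then have "definable M (A \<union> s ` {..<m}) {B + m} Q"
    by (rule definable_mono) (auto simp: W_def)
  then have "definable M (A \<union> s ` {..<m}) ((\<lambda>_. 0) ` {B + m}) (\<lambda>g. Q (g \<circ> (\<lambda>_. 0)))"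
    by (rule definable_rename) (use assms(3) in auto)
  moreover have "Q (g \<circ> (\<lambda>_. 0)) \<longleftrightarrow> (\<exists>t. P (\<lambda>k. if k < m then s k else if k = m then g 0 else t k))"
    for g
  proof
    assume "Q (g \<circ> (\<lambda>_. 0))"
    then obtain h where "\<forall>v. v \<notin> W \<longrightarrow> h v = (g \<circ> (\<lambda>_. 0)) v"
      and h: "P (\<lambda>k. if k < m then s k else h (B + k))"
      unfolding Q_def by blast
    then have "h (B + m) = g 0" by (simp add: W_def)
    with h show "\<exists>t. P (\<lambda>k. if k < m then s k else if k = m then g 0 else t k)"
      by (intro exI[of _ "\<lambda>k. h (B + k)"]) (auto elim!: back_subst[of P])
  next
    assume "\<exists>t. P (\<lambda>k. if k < m then s k else if k = m then g 0 else t k)"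
    then obtain t where t: "P (\<lambda>k. if k < m then s k else if k = m then g 0 else t k)" ..
    define h where "h v = (if v \<in> W then t (v - B) else g 0)" for v
    have "P (\<lambda>k. if k < m then s k else h (B + k)) \<longleftrightarrow>
        P (\<lambda>k. if k < m then s k else if k = m then g 0 else t k)"
      by (rule definable_shift_local[OF assms(1)]) (auto simp: h_def W_def)
    with t have "P (\<lambda>k. if k < m then s k else h (B + k))" by simp
    then show "Q (g \<circ> (\<lambda>_. 0))"
      unfolding Q_def by (intro exI[of _ h]) (simp add: h_def)
  qed
  ultimately have "definable M (A \<union> s ` {..<m}) ((\<lambda>_. 0) ` {B + m})
      (\<lambda>g. \<exists>t. P (\<lambda>k. if k < m then s k else if k = m then g 0 else t k))"
    by (rule definable_cong)
  then show ?thesis by simp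
qed

lemma definable_extends_to_indiscernible:
  assumes "finite \<Phi>" and "\<forall>\<phi>\<in>\<Phi>. L_formula \<phi>" and "m < N"
  shows "definable M (s ` {..<m}) {0} (\<lambda>g. extends_to_indiscernible M \<Phi> N (Suc m) (s(m := g 0)))"
proof -
  have "definable M {} {N..<N + N} (\<lambda>g. indiscernible_prefix M \<Phi> N (\<lambda>k. g (N + k)))"
    using assms by (intro definable_indiscernible_prefix) auto
  from definable_next_term[OF this assms(3)] assms(3)
  show ?thesis
    unfolding extends_to_indiscernible_Suc_iff by simp
qed

definition prefix_extendable :: "('f, 'r, 'a) struc \<Rightarrow> nat \<Rightarrow> (nat \<Rightarrow> 'a) \<Rightarrow> bool" where
  "prefix_extendable M m s \<longleftrightarrow>
     (\<forall>N \<Phi>. finite \<Phi> \<and> (\<forall>\<phi>\<in>\<Phi>. L_formula \<phi>) \<longrightarrow> extends_to_indiscernible M \<Phi> N m s)"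

lemma prefix_extendable_finite_requirements:
  assumes "prefix_extendable M m s" and "finite C"
    and "\<forall>p\<in>C. finite (snd p) \<and> (\<forall>\<phi>\<in>snd p. L_formula \<phi>)"
  shows "\<exists>a. \<forall>p\<in>C. extends_to_indiscernible M (snd p) (fst p) (Suc m) (s(m := a))"
proof -
  define N' where "N' = (\<Sum>p\<in>C. fst p)"
  define \<Phi>' where "\<Phi>' = (\<Union>p\<in>C. snd p)"
  have "finite \<Phi>' \<and> (\<forall>\<phi>\<in>\<Phi>'. L_formula \<phi>)"
    using assms(2,3) by (auto simp: \<Phi>'_def)
  with assms(1) have "extends_to_indiscernible M \<Phi>' N' m s"
    unfolding prefix_extendable_def by blast
  then obtain s' where s': "\<forall>i<m. s' i = s i" "indiscernible_prefix M \<Phi>' N' s'"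
    unfolding extends_to_indiscernible_def by blast
  have "extends_to_indiscernible M (snd p) (fst p) (Suc m) (s(m := s' m))" if "p \<in> C" for p
  proof -
    have "snd p \<subseteq> \<Phi>'"
      using that by (auto simp: \<Phi>'_def)
    moreover have "fst p \<le> N'"
      using member_le_sum[OF that, of fst] assms(2) by (simp add: N'_def)
    ultimately have "indiscernible_prefix M (snd p) (fst p) s'"
      by (rule indiscernible_prefix_mono[OF s'(2)])
    moreover have "\<forall>i<Suc m. s' i = (s(m := s' m)) i"
      using s'(1) by (simp add: less_Suc_eq)
    ultimately show ?thesis
      unfolding extends_to_indiscernible_def by (intro exI[of _ s'] conjI)
  qed
  then show ?thesis by blast
qed

lemma saturated_realizes_definable:
  assumes "saturated K M" and "(natLeq, card_of K) \<in> ordLess" and "finite A"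
    and "\<And>x. x \<in> X \<Longrightarrow> definable M A {0} (P x)"
    and "\<And>F. finite F \<Longrightarrow> F \<subseteq> X \<Longrightarrow> \<exists>a. \<forall>x\<in>F. P x (\<lambda>_. a)"
  shows "\<exists>a. \<forall>x\<in>X. P x (\<lambda>_. a)"
proof -
  have "\<forall>x\<in>X. \<exists>\<chi>. params \<chi> \<subseteq> A \<and> fv \<chi> \<subseteq> {0} \<and> (\<forall>g. sat M g \<chi> \<longleftrightarrow> P x g)"
    using assms(4) unfolding definable_def by blast
  then obtain \<chi> where \<chi>: "\<forall>x\<in>X. params (\<chi> x) \<subseteq> A \<and> fv (\<chi> x) \<subseteq> {0} \<and> (\<forall>g. sat M g (\<chi> x) \<longleftrightarrow> P x g)"
    by (rule bchoice[THEN exE])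
  have "(card_of A, natLeq) \<in> ordLess"
    using assms(3) finite_iff_ordLess_natLeq by blast
  then have "(card_of A, card_of K) \<in> ordLess"
    using assms(2) by (rule ordLess_transitive)
  moreover have "\<forall>\<phi>\<in>\<chi> ` X. params \<phi> \<subseteq> A \<and> fv \<phi> \<subseteq> {0}"
    using \<chi> by blast
  moreover have "\<forall>q. finite q \<and> q \<subseteq> \<chi> ` X \<longrightarrow> (\<exists>a. \<forall>\<phi>\<in>q. sat M (\<lambda>_. a) \<phi>)"
  proof (intro allI impI)
    fix q assume "finite q \<and> q \<subseteq> \<chi> ` X"
    then obtain F where F: "F \<subseteq> X" "finite F" "q = \<chi> ` F"
      using finite_subset_image[of q \<chi> X] by blast
    then obtain a where "\<forall>x\<in>F. P x (\<lambda>_. a)"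
      using assms(5) by blast
    with \<chi> F(1) have "\<forall>x\<in>F. sat M (\<lambda>_. a) (\<chi> x)"
      by blast
    with F(3) show "\<exists>a. \<forall>\<phi>\<in>q. sat M (\<lambda>_. a) \<phi>"
      by blast
  qed
  ultimately have "\<exists>a. \<forall>\<phi>\<in>\<chi> ` X. sat M (\<lambda>_. a) \<phi>"
    using assms(1) unfolding saturated_def by blast
  then obtain a where "\<forall>\<phi>\<in>\<chi> ` X. sat M (\<lambda>_. a) \<phi>" ..
  with \<chi> have "\<forall>x\<in>X. P x (\<lambda>_. a)"
    by blast
  then show ?thesis ..
qed

lemma prefix_extendable_step:
  fixes M :: "('f, 'r, 'a) struc"
  assumes "saturated K M" and "(natLeq, card_of K) \<in> ordLess" and "prefix_extendable M m s"
  shows "\<exists>a. prefix_extendable M (Suc m) (s(m := a))"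
proof -
  define D :: "(nat \<times> ('f, 'r, 'a) fm set) set"
    where "D = {p. m < fst p \<and> finite (snd p) \<and> (\<forall>\<phi>\<in>snd p. L_formula \<phi>)}"
  have "\<exists>a. \<forall>p\<in>D. extends_to_indiscernible M (snd p) (fst p) (Suc m) (s(m := a))"
  proof (rule saturated_realizes_definable[OF assms(1,2),
        where P = "\<lambda>p g. extends_to_indiscernible M (snd p) (fst p) (Suc m) (s(m := g 0))"])
    show "finite (s ` {..<m})" by simp
    show "definable M (s ` {..<m}) {0}
        (\<lambda>g. extends_to_indiscernible M (snd p) (fst p) (Suc m) (s(m := g 0)))" if "p \<in> D" for p
      using that by (intro definable_extends_to_indiscernible) (simp_all add: D_def)
    show "\<exists>a. \<forall>p\<in>F. extends_to_indiscernible M (snd p) (fst p) (Suc m) (s(m := a))"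
      if "finite F" "F \<subseteq> D" for F
      using that by (intro prefix_extendable_finite_requirements[OF assms(3)]) (auto simp: D_def)
  qed
  then obtain a where a: "\<forall>p\<in>D. extends_to_indiscernible M (snd p) (fst p) (Suc m) (s(m := a))" ..
  have "extends_to_indiscernible M \<Phi> N (Suc m) (s(m := a))"
    if "finite \<Phi> \<and> (\<forall>\<phi>\<in>\<Phi>. L_formula \<phi>)" for N and \<Phi> :: "('f, 'r, 'a) fm set"
  proof -
    have "(max N (Suc m), \<Phi>) \<in> D"
      using that by (simp add: D_def)
    with a have "extends_to_indiscernible M \<Phi> (max N (Suc m)) (Suc m) (s(m := a))"
      by fastforce
    then show ?thesis
      by (rule extends_to_indiscernible_mono) simp_all
  qed
  then show ?thesis
    unfolding prefix_extendable_def by blast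
qed

definition indiscernible_sequence :: "('f, 'r, 'a) struc \<Rightarrow> (nat \<Rightarrow> 'a) \<Rightarrow> bool" where
  "indiscernible_sequence M s \<longleftrightarrow>
     (\<forall>N \<Phi>. finite \<Phi> \<and> (\<forall>\<phi>\<in>\<Phi>. L_formula \<phi>) \<longrightarrow> indiscernible_prefix M \<Phi> N s)"

lemma ex_indiscernible_sequence:
  assumes "prefix_extendable M 0 s\<^sub>0"
    and "\<And>m s. prefix_extendable M m s \<Longrightarrow> \<exists>a. prefix_extendable M (Suc m) (s(m := a))"
  shows "\<exists>s. indiscernible_sequence M s"
proof -
  have "\<exists>t. prefix_extendable M 0 t"
    using assms(1) by blast
  moreover have "\<exists>t. prefix_extendable M (Suc m) t \<and> (\<forall>i<m. t i = s i)"
    if ext: "prefix_extendable M m s" for m s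
  proof -
    obtain a where "prefix_extendable M (Suc m) (s(m := a))"
      using assms(2)[OF ext] ..
    then show ?thesis by (intro exI[of _ "s(m := a)"]) simp
  qed
  ultimately have "\<exists>f. \<forall>m. prefix_extendable M m (f m) \<and> (\<forall>i<m. f (Suc m) i = f m i)"
    by (rule dependent_nat_choice)
  then obtain f where f: "\<And>m. prefix_extendable M m (f m)" "\<And>m i. i < m \<Longrightarrow> f (Suc m) i = f m i"
    by blast
  define s where "s i = f (Suc i) i" for i
  have agree: "f m i = s i" if "i < m" for m i
    using that
  proof (induction m)
    case (Suc m)
    then show ?case
      using f(2)[of i m] by (cases "i = m") (simp_all add: s_def)
  qed simp
  have "indiscernible_prefix M \<Phi> N s" if "finite \<Phi> \<and> (\<forall>\<phi>\<in>\<Phi>. L_formula \<phi>)" for N \<Phi>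
  proof -
    have "extends_to_indiscernible M \<Phi> N N (f N)"
      using f(1)[of N] that unfolding prefix_extendable_def by blast
    then obtain s' where s': "\<forall>i<N. s' i = f N i" "indiscernible_prefix M \<Phi> N s'"
      unfolding extends_to_indiscernible_def by blast
    have "indiscernible_prefix M \<Phi> N s' \<longleftrightarrow> indiscernible_prefix M \<Phi> N s"
      using s'(1) agree by (intro indiscernible_prefix_cong) simp
    with s'(2) show ?thesis by simp
  qed
  then show ?thesis
    unfolding indiscernible_sequence_def by blast
qed

lemma indiscernible_sequence_inj:
  assumes "indiscernible_sequence M s"
  shows "inj s"
proof (rule injI)
  fix x y assume "s x = s y"
  have "inj_on s {..<Suc (x + y)}"
    using assms unfolding indiscernible_sequence_def indiscernible_prefix_def by blast
  then show "x = y"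
    using \<open>s x = s y\<close> by (rule inj_onD) auto
qed

lemma indiscernible_sequence_sat:
  assumes "indiscernible_sequence M s" and "distinct xs" and "set xs \<subseteq> range s"
    and "L_formula \<phi>" and "fv \<phi> \<subseteq> {..<length xs}"
  shows "sat M (\<lambda>i. xs ! i) \<phi> \<longleftrightarrow> sat M s \<phi>"
proof -
  define "is" where "is = map (inv s) xs"
  have "distinct is"
    using assms(2,3) inj_on_inv_into[OF assms(3)] by (simp add: is_def distinct_map)
  moreover obtain N where "set is \<subseteq> {..<N}"
    using finite_nat_set_iff_bounded[of "set is"] by auto
  moreover have "indiscernible_prefix M {\<phi>} N s"
    using assms(1,4) unfolding indiscernible_sequence_def by simp
  ultimately have "sat M (\<lambda>i. s (is ! i)) \<phi> \<longleftrightarrow> sat M s \<phi>"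
    using assms(5) by (intro indiscernible_prefixD[where \<Phi> = "{\<phi>}"]) (simp_all add: is_def)
  moreover have "s (is ! i) = xs ! i" if "i < length xs" for i
  proof -
    have "xs ! i \<in> range s"
      using nth_mem[OF that] assms(3) by blast
    with that show ?thesis by (simp add: is_def f_inv_into_f)
  qed
  then have "sat M (\<lambda>i. s (is ! i)) \<phi> \<longleftrightarrow> sat M (\<lambda>i. xs ! i) \<phi>"
    using assms(5) by (intro sat_cong) auto
  ultimately show ?thesis by simp
qed

lemma indiscernible_set_range:
  fixes M :: "('f, 'r, 'a) struc"
  assumes "indiscernible_sequence M s"
  shows "indiscernible_set M (range s)"
  unfolding indiscernible_set_def
proof (intro allI impI)
  fix n xs ys and \<phi> :: "('f, 'r, 'a) fm"
  assume "length xs = n \<and> length ys = n \<and> distinct xs \<and> distinct ys \<and>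
      set xs \<subseteq> range s \<and> set ys \<subseteq> range s"
    and "L_formula \<phi> \<and> fv \<phi> \<subseteq> {..<n}"
  then show "sat M (\<lambda>i. xs ! i) \<phi> \<longleftrightarrow> sat M (\<lambda>i. ys ! i) \<phi>"
    using indiscernible_sequence_sat[OF assms, of xs \<phi>] indiscernible_sequence_sat[OF assms, of ys \<phi>]
    by simp
qed

lemma ex_infinite_indiscernible_set:
  assumes "saturated K M" and "(natLeq, card_of K) \<in> ordLess" and "has_symmetric_tuples M"
  shows "\<exists>I. infinite I \<and> indiscernible_set M I"
proof -
  have "prefix_extendable M 0 s" for s
    unfolding prefix_extendable_def extends_to_indiscernible_def
    using ex_indiscernible_prefix[OF assms(3)] by simp
  then obtain s where s: "indiscernible_sequence M s"
    using ex_indiscernible_sequence prefix_extendable_step[OF assms(1,2)] by metis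
  have "infinite (range s)"
    using finite_imageD[OF _ indiscernible_sequence_inj[OF s]] by auto
  with indiscernible_set_range[OF s] show ?thesis by blast
qed

theorem mainTheorem13:
  fixes T :: "('f, 'r, 'a) fm set" and K :: "'k set" and M :: "('f, 'r, 'a) struc"
  assumes "complete_theory T" and "monster_model T K M"
  shows "(\<not> (\<exists>I. infinite I \<and> indiscernible_set M I)) \<longleftrightarrow>
    (\<exists>(n::nat) \<phi>. L_formula \<phi> \<and> fv \<phi> \<subseteq> {..<n} \<and>
       (\<forall>as. length as = n \<and> distinct as \<longrightarrow>
          (\<exists>\<pi>1 \<pi>2. \<pi>1 permutes {..<n} \<and> \<pi>2 permutes {..<n} \<and>
             sat M (\<lambda>i. as ! (\<pi>1 i)) \<phi> \<and> \<not> sat M (\<lambda>i. as ! (\<pi>2 i)) \<phi>)))"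
proof -
  have "saturated K M" and "(natLeq, card_of K) \<in> ordLess"
    using assms(2) unfolding monster_model_def by auto
  then have "(\<exists>I. infinite I \<and> indiscernible_set M I) \<longleftrightarrow> has_symmetric_tuples M"
    using ex_infinite_indiscernible_set indiscernible_set_imp_has_symmetric_tuples by metis
  then show ?thesis
    unfolding has_symmetric_tuples_iff by blast
qed

end
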